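(* Let $f:X\to Y$ be a local homeomorphism between metric spaces, where $X$ is complete and $Y$ is path-connected and locally $\mathcal R$-contractible. Suppose that (1) for every bounded subset $B$ of $X$, $\inf_{x\in B}D_x^-f>0$; and (2) for some $y_0\in Y$ and $x_0\in X$, $d(f(x),y_0)\to\infty$ as $d(x,x_0)\to\infty$. Then $f$ is a covering projection.
   Context: A path $p:[0,1]\to Y$ is rectifiable if its length $\sup\sum_i d(p(t_i),p(t_{i+1}))$ (over partitions of $[0,1]$) is finite. $Y$ is locally $\mathcal R$-contractible if every $y_0\in Y$ has an open neighborhood $U$ with a continuous homotopy $H:U\times[0,1]\to U$ such that $H(y_0,t)=y_0$ for all $t$, $H(y,0)=y_0$, $H(y,1)=y$ for all $y\in U$, and each path $t\mapsto H(y,t)$ is rectifiable. For non-isolated $x\in X$, $D_x^-f=\liminf_{z\to x,\,z\neq x}\frac{d(f(z),f(x))}{d(z,x)}$; $X$ is assumed to have no isolated points. *)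

theory Defs
  imports "HOL-Analysis.Analysis"
begin

definition local_homeo :: "('a::topological_space \<Rightarrow> 'b::topological_space) \<Rightarrow> bool" where
  "local_homeo f \<longleftrightarrow>
     (\<forall>x. \<exists>U. open U \<and> x \<in> U \<and> open (f ` U) \<and> (\<exists>g. homeomorphism U (f ` U) f g))"

definition rectifiable_path :: "(real \<Rightarrow> 'a::metric_space) \<Rightarrow> bool" where
  "rectifiable_path p \<longleftrightarrow>
     (\<exists>M. \<forall>(n::nat) (t::nat \<Rightarrow> real).
        (\<forall>i\<le>n. t i \<in> {0..1}) \<and> (\<forall>i<n. t i \<le> t (Suc i)) \<longrightarrow>
        (\<Sum>i<n. dist (p (t i)) (p (t (Suc i)))) \<le> M)"

definition locally_R_contractible :: "'a::metric_space set \<Rightarrow> bool" where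
  "locally_R_contractible Y \<longleftrightarrow>
     (\<forall>y0\<in>Y. \<exists>U. openin (top_of_set Y) U \<and> y0 \<in> U \<and>
        (\<exists>H. continuous_on (U \<times> {0..1}) H \<and> H ` (U \<times> {0..1}) \<subseteq> U \<and>
             (\<forall>t\<in>{0..1}. H (y0, t) = y0) \<and>
             (\<forall>y\<in>U. H (y, 0) = y0 \<and> H (y, 1) = y \<and> rectifiable_path (\<lambda>t. H (y, t)))))"

definition lower_deriv :: "('a::metric_space \<Rightarrow> 'b::metric_space) \<Rightarrow> 'a \<Rightarrow> ereal" where
  "lower_deriv f x = Liminf (at x) (\<lambda>z. ereal (dist (f z) (f x) / dist z x))"

end

(* Hypothesis (1) on the bounded set that properness (2) assigns to a compact subset of Y
   gives c > 0 such that f expands distances locally by the factor c at every point over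
   that set. A lift p of a rectifiable path g therefore satisfies
   c d(p a, p b) <= L b - L a, where L s is the length of g on [0, s]; so a lift defined on
   [0, s) is Cauchy at s and extends to s by completeness of X, while the local
   homeomorphism extends lifts beyond s: rectifiable paths lift uniquely. If H contracts an
   open set U to y along rectifiable paths, the endpoints of the lifts of the paths H(z, -)
   starting at the points a over y form continuous sections of f over U whose images are
   disjoint and cover the preimage of U, so U is evenly covered. Lifting the same paths
   backwards shows that the complement of f(X) is open, and f is onto because Y is
   connected. *)

theory Submission
  imports Defs
begin

section \<open>Local homeomorphisms\<close>

lemma local_homeoE:
  assumes "local_homeo f"
  obtains V g where "open V" "x \<in> V" "open (f ` V)" "homeomorphism V (f ` V) f g"
  using assms unfolding local_homeo_def by blast

lemma local_homeo_imp_continuous: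
  fixes f :: "'a::metric_space \<Rightarrow> 'b::metric_space"
  assumes "local_homeo f"
  shows "continuous_on UNIV f"
proof -
  have "isCont f x" for x
  proof -
    obtain V g where "open V" "x \<in> V" "homeomorphism V (f ` V) f g"
      using local_homeoE[OF assms] by metis
    then show ?thesis
      using continuous_on_eq_continuous_at homeomorphism_cont1 by blast
  qed
  then show ?thesis
    by (simp add: continuous_at_imp_continuous_on)
qed

lemma local_homeo_open_range:
  assumes "local_homeo f"
  shows "open (range f)"
proof (subst open_subopen, intro ballI)
  fix y assume "y \<in> range f"
  then obtain x where "y = f x" by blast
  moreover obtain V g where "x \<in> V" "open (f ` V)"
    using local_homeoE[OF assms] by metis
  ultimately show "\<exists>T. open T \<and> y \<in> T \<and> T \<subseteq> range f"
    by blast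
qed

lemma local_homeo_coincidence_openin:
  assumes "local_homeo f" "continuous_on T p" "continuous_on T q"
    and "\<And>t. t \<in> T \<Longrightarrow> f (p t) = f (q t)"
  shows "openin (top_of_set T) {t \<in> T. p t = q t}"
proof (subst openin_subopen, intro ballI)
  fix z assume "z \<in> {t \<in> T. p t = q t}"
  then have z: "z \<in> T" "p z = q z" by auto
  obtain V g where V: "open V" "p z \<in> V" "homeomorphism V (f ` V) f g"
    using local_homeoE[OF assms(1)] by metis
  let ?W = "(T \<inter> p -` V) \<inter> (T \<inter> q -` V)"
  have "openin (top_of_set T) ?W"
    by (intro openin_Int continuous_openin_preimage_gen assms(2,3) V(1))
  moreover have "?W \<subseteq> {t \<in> T. p t = q t}"
  proof clarify
    fix t assume "t \<in> T" "p t \<in> V" "q t \<in> V"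
    then show "p t = q t"
      using homeomorphism_apply1[OF V(3)] assms(4) by metis
  qed
  ultimately show "\<exists>W. openin (top_of_set T) W \<and> z \<in> W \<and> W \<subseteq> {t \<in> T. p t = q t}"
    using z V(2) by auto
qed

lemma local_homeo_lift_unique:
  fixes f :: "'a::metric_space \<Rightarrow> 'b::topological_space"
  assumes "local_homeo f" "connected T" "continuous_on T p" "continuous_on T q"
    and "\<And>t. t \<in> T \<Longrightarrow> f (p t) = f (q t)"
    and "a \<in> T" "p a = q a" "t \<in> T"
  shows "p t = q t"
proof -
  have "closedin (top_of_set T) {t \<in> T. dist (p t) (q t) = 0}"
    by (intro continuous_closedin_preimage_constant continuous_intros assms(3,4))
  then have "closedin (top_of_set T) {t \<in> T. p t = q t}"
    by (simp only: dist_eq_0_iff)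
  moreover have "openin (top_of_set T) {t \<in> T. p t = q t}"
    using local_homeo_coincidence_openin assms(1,3-5) .
  moreover have "{t \<in> T. p t = q t} \<noteq> {}"
    using assms(6,7) by blast
  ultimately have "{t \<in> T. p t = q t} = T"
    using assms(2) connected_clopen by blast
  then show ?thesis
    using assms(8) by blast
qed

section \<open>Length of a path\<close>

definition chord_sum :: "(real \<Rightarrow> 'a::metric_space) \<Rightarrow> nat \<Rightarrow> (nat \<Rightarrow> real) \<Rightarrow> real" where
  "chord_sum g n t = (\<Sum>i<n. dist (g (t i)) (g (t (Suc i))))"

definition ordered_in :: "real \<Rightarrow> real \<Rightarrow> nat \<Rightarrow> (nat \<Rightarrow> real) \<Rightarrow> bool" where
  "ordered_in a b n t \<longleftrightarrow> (\<forall>i\<le>n. t i \<in> {a..b}) \<and> (\<forall>i<n. t i \<le> t (Suc i))"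

definition length_upto :: "(real \<Rightarrow> 'a::metric_space) \<Rightarrow> real \<Rightarrow> real" where
  "length_upto g s = Sup {chord_sum g n t | n t. ordered_in 0 s n t}"

lemma rectifiable_path_iff:
  "rectifiable_path g \<longleftrightarrow> (\<exists>M. \<forall>n t. ordered_in 0 1 n t \<longrightarrow> chord_sum g n t \<le> M)"
  unfolding rectifiable_path_def chord_sum_def ordered_in_def ..

lemma rectifiable_pathE:
  assumes "rectifiable_path g"
  obtains M where "\<And>n t s. s \<le> 1 \<Longrightarrow> ordered_in 0 s n t \<Longrightarrow> chord_sum g n t \<le> M"
proof -
  obtain M where "\<And>n t. ordered_in 0 1 n t \<Longrightarrow> chord_sum g n t \<le> M"
    using assms unfolding rectifiable_path_iff by blast
  moreover have "ordered_in 0 1 n t" if "s \<le> 1" "ordered_in 0 s n t" for n t and s :: real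
    using that unfolding ordered_in_def by force
  ultimately show ?thesis
    using that by blast
qed

lemma rectifiable_path_reverse:
  assumes "rectifiable_path g"
  shows "rectifiable_path (\<lambda>t. g (1 - t))"
  unfolding rectifiable_path_iff
proof -
  obtain M where M: "\<And>n t. ordered_in 0 1 n t \<Longrightarrow> chord_sum g n t \<le> M"
    using assms unfolding rectifiable_path_iff by blast
  have "chord_sum (\<lambda>t. g (1 - t)) n t \<le> M" if t: "ordered_in 0 1 n t" for n t
  proof -
    define u where "u i = 1 - t (n - i)" for i
    have "ordered_in 0 1 n u"
      unfolding ordered_in_def
    proof (intro conjI allI impI)
      fix i assume "i \<le> n"
      then show "u i \<in> {0..1}"
        using t by (auto simp: ordered_in_def u_def)
    next
      fix i assume "i < n"
      then have "t (n - Suc i) \<le> t (Suc (n - Suc i))"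
        using t by (simp add: ordered_in_def)
      then show "u i \<le> u (Suc i)"
        using \<open>i < n\<close> by (simp add: u_def Suc_diff_Suc)
    qed
    have "chord_sum g n u = (\<Sum>i<n. dist (g (u (n - Suc i))) (g (u (Suc (n - Suc i)))))"
      unfolding chord_sum_def by (rule sum.nat_diff_reindex[symmetric])
    also have "\<dots> = chord_sum (\<lambda>t. g (1 - t)) n t"
      unfolding chord_sum_def by (intro sum.cong refl) (simp add: u_def Suc_diff_Suc dist_commute)
    finally show ?thesis
      using M[OF \<open>ordered_in 0 1 n u\<close>] by simp
  qed
  then show "\<exists>M. \<forall>n t. ordered_in 0 1 n t \<longrightarrow> chord_sum (\<lambda>t. g (1 - t)) n t \<le> M"
    by blast
qed

lemma length_upto_upper:
  assumes "rectifiable_path g" "s \<le> 1" "ordered_in 0 s n t"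
  shows "chord_sum g n t \<le> length_upto g s"
proof -
  obtain M where "\<And>n t. ordered_in 0 s n t \<Longrightarrow> chord_sum g n t \<le> M"
    using rectifiable_pathE[OF assms(1)] assms(2) by metis
  then have "bdd_above {chord_sum g n t | n t. ordered_in 0 s n t}"
    by (intro bdd_aboveI) blast
  then show ?thesis
    unfolding length_upto_def using assms(3) by (intro cSup_upper) blast+
qed

lemma length_upto_least:
  assumes "0 \<le> s" "\<And>n t. ordered_in 0 s n t \<Longrightarrow> chord_sum g n t \<le> C"
  shows "length_upto g s \<le> C"
proof -
  have "ordered_in 0 s 0 (\<lambda>_. 0)"
    using assms(1) by (simp add: ordered_in_def)
  then show ?thesis
    unfolding length_upto_def using assms(2) by (intro cSup_least) blast+
qed

lemma length_upto_add_dist: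
  assumes "rectifiable_path g" "0 \<le> a" "a \<le> b" "b \<le> 1"
  shows "length_upto g a + dist (g a) (g b) \<le> length_upto g b"
proof -
  have "chord_sum g n t \<le> length_upto g b - dist (g a) (g b)" if t: "ordered_in 0 a n t" for n t
  proof -
    define t' where "t' i = (if i \<le> n then t i else if i = Suc n then a else b)" for i
    have "ordered_in 0 b (n + 2) t'"
      using t assms(2,3) unfolding ordered_in_def t'_def by (auto simp: le_Suc_eq less_Suc_eq)
    then have "chord_sum g (n + 2) t' \<le> length_upto g b"
      by (rule length_upto_upper[OF assms(1,4)])
    moreover have "chord_sum g (n + 2) t' = chord_sum g n t + dist (g (t n)) (g a) + dist (g a) (g b)"
      unfolding chord_sum_def t'_def by simp
    ultimately show ?thesis
      using zero_le_dist[of "g (t n)" "g a"] by linarith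
  qed
  then show ?thesis
    using length_upto_least[OF assms(2)] by fastforce
qed

lemma length_upto_mono:
  assumes "rectifiable_path g" "0 \<le> a" "a \<le> b" "b \<le> 1"
  shows "length_upto g a \<le> length_upto g b"
  using length_upto_add_dist[OF assms] zero_le_dist[of "g a" "g b"] by linarith

lemma length_upto_Cauchy_at_left:
  assumes "rectifiable_path g" "0 < s" "s \<le> 1" "e > 0"
  obtains t0 where "0 \<le> t0" "t0 < s" "\<And>t. t0 \<le> t \<Longrightarrow> t < s \<Longrightarrow> length_upto g t - length_upto g t0 < e"
proof -
  define \<Lambda> where "\<Lambda> = Sup (length_upto g ` {0..<s})"
  obtain M where M: "\<And>n t s. s \<le> 1 \<Longrightarrow> ordered_in 0 s n t \<Longrightarrow> chord_sum g n t \<le> M"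
    using rectifiable_pathE[OF assms(1)] by blast
  have "length_upto g t \<le> M" if "0 \<le> t" "t < s" for t
    using that assms(3) M[of t] by (intro length_upto_least) auto
  then have bdd: "bdd_above (length_upto g ` {0..<s})"
    by (intro bdd_aboveI) auto
  have "\<Lambda> - e < \<Lambda>"
    using assms(4) by simp
  then obtain t0 where t0: "0 \<le> t0" "t0 < s" "\<Lambda> - e < length_upto g t0"
    unfolding \<Lambda>_def using less_cSup_iff[OF _ bdd] assms(2) by auto
  have upper: "length_upto g t \<le> \<Lambda>" if "0 \<le> t" "t < s" for t
    unfolding \<Lambda>_def using that by (intro cSup_upper bdd) auto
  have "length_upto g t - length_upto g t0 < e" if "t0 \<le> t" "t < s" for t
    using upper[of t] that t0 by linarith
  with t0(1,2) show ?thesis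
    using that by blast
qed

section \<open>Lifting rectifiable paths\<close>

definition expanding_at :: "real \<Rightarrow> ('a::metric_space \<Rightarrow> 'b::metric_space) \<Rightarrow> 'a \<Rightarrow> bool" where
  "expanding_at c f x \<longleftrightarrow> (\<exists>e>0. \<forall>z. dist z x < e \<longrightarrow> c * dist z x \<le> dist (f z) (f x))"

lemma lower_deriv_gt_imp_expanding_at:
  assumes "ereal c < lower_deriv f x"
  shows "expanding_at c f x"
proof -
  have "\<forall>\<^sub>F z in at x. ereal c < ereal (dist (f z) (f x) / dist z x)"
    using less_LiminfD[OF assms[unfolded lower_deriv_def]] by simp
  then obtain e where "e > 0" and e: "\<And>z. z \<noteq> x \<Longrightarrow> dist z x < e \<Longrightarrow> c < dist (f z) (f x) / dist z x"
    unfolding eventually_at by auto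
  have "c * dist z x \<le> dist (f z) (f x)" if "dist z x < e" for z
  proof (cases "z = x")
    case False
    then show ?thesis
      using e[OF False that] by (simp add: pos_less_divide_eq less_imp_le)
  qed simp
  then show ?thesis
    unfolding expanding_at_def using \<open>e > 0\<close> by blast
qed

lemma expanding_over_bounded:
  fixes f :: "'a::metric_space \<Rightarrow> 'b::metric_space"
  assumes deriv: "\<And>B::'a set. bounded B \<Longrightarrow> (INF x\<in>B. lower_deriv f x) > 0"
    and proper: "\<exists>y0 x0. \<forall>M. \<exists>R. \<forall>x. dist x x0 > R \<longrightarrow> dist (f x) y0 > M"
    and "bounded K"
  obtains c where "c > 0" "\<And>x. f x \<in> K \<Longrightarrow> expanding_at c f x"
proof -
  obtain y0 x0 where proper0: "\<And>M. \<exists>R. \<forall>x. dist x x0 > R \<longrightarrow> dist (f x) y0 > M"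
    using proper by blast
  obtain M where M: "\<And>y. y \<in> K \<Longrightarrow> dist y0 y \<le> M"
    using \<open>bounded K\<close> unfolding bounded_any_center[where a=y0] by blast
  obtain R where R: "\<And>x. dist x x0 > R \<Longrightarrow> dist (f x) y0 > M"
    using proper0 by blast
  have over_K: "x \<in> cball x0 R" if "f x \<in> K" for x
    using R[of x] M[OF that] by (force simp: dist_commute)
  have "(INF x\<in>cball x0 R. lower_deriv f x) > 0"
    using deriv by simp
  then obtain c where "0 < ereal c" and c: "ereal c < (INF x\<in>cball x0 R. lower_deriv f x)"
    using ereal_dense2 by blast
  have "expanding_at c f x" if "f x \<in> K" for x
    using less_INF_D[OF c over_K[OF that]] by (rule lower_deriv_gt_imp_expanding_at)
  with \<open>0 < ereal c\<close> show ?thesis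
    using that by simp
qed

definition is_lift :: "('a::topological_space \<Rightarrow> 'b) \<Rightarrow> (real \<Rightarrow> 'b) \<Rightarrow> 'a \<Rightarrow> real \<Rightarrow> (real \<Rightarrow> 'a) \<Rightarrow> bool" where
  "is_lift f g x s p \<longleftrightarrow> continuous_on {0..s} p \<and> p 0 = x \<and> (\<forall>t\<in>{0..s}. f (p t) = g t)"

lemma is_lift_restrict: "is_lift f g x u p \<Longrightarrow> 0 \<le> t \<Longrightarrow> t \<le> u \<Longrightarrow> is_lift f g x t p"
  unfolding is_lift_def by (auto intro: continuous_on_subset)

lemma is_lift_unique:
  fixes f :: "'a::metric_space \<Rightarrow> 'b::topological_space"
  assumes "local_homeo f" "is_lift f g x s p" "is_lift f g x s q" "t \<in> {0..s}"
  shows "p t = q t"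
  using assms unfolding is_lift_def
  by (intro local_homeo_lift_unique[of f "{0..s}" p q 0 t]) auto

lemma is_lift_reverse:
  assumes "is_lift f g x 1 p"
  shows "is_lift f (\<lambda>t. g (1 - t)) (p 1) 1 (\<lambda>t. p (1 - t))"
proof -
  have "continuous_on {0..1} p"
    using assms by (simp add: is_lift_def)
  then have "continuous_on {0..1} (\<lambda>t. p (1 - t))"
    by (rule continuous_on_compose2) (auto intro!: continuous_intros)
  then show ?thesis
    using assms by (auto simp: is_lift_def)
qed

lemma is_lift_glue:
  fixes f :: "'a::metric_space \<Rightarrow> 'b::topological_space"
  assumes "local_homeo f" and lifts: "\<And>u. 0 \<le> u \<Longrightarrow> u < s \<Longrightarrow> \<exists>p. is_lift f g x u p"
  obtains q where "\<And>u. 0 \<le> u \<Longrightarrow> u < s \<Longrightarrow> is_lift f g x u q"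
proof -
  define P where "P u = (SOME p. is_lift f g x u p)" for u
  have P: "is_lift f g x u (P u)" if "0 \<le> u" "u < s" for u
    using lifts[OF that] someI_ex unfolding P_def by metis
  define q where "q t = P t t" for t
  have "is_lift f g x u q" if "0 \<le> u" "u < s" for u
  proof -
    have "q t = P u t" if t: "t \<in> {0..u}" for t
    proof -
      have "is_lift f g x t (P u)" "is_lift f g x t (P t)"
        using is_lift_restrict[OF P] P t \<open>u < s\<close> by auto
      then show ?thesis
        unfolding q_def using is_lift_unique[OF assms(1)] t by simp
    qed
    then show ?thesis
      using P[OF that] that(1) unfolding is_lift_def by (auto intro: continuous_on_eq)
  qed
  then show ?thesis
    using that by blast
qed

lemma real_induct:
  fixes a b :: real
  assumes "a \<le> b" and base: "P a"
    and closed: "\<And>s. a < s \<Longrightarrow> s \<le> b \<Longrightarrow> (\<And>u. a \<le> u \<Longrightarrow> u < s \<Longrightarrow> P u) \<Longrightarrow> P s"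
    and step: "\<And>s. a \<le> s \<Longrightarrow> s < b \<Longrightarrow> (\<And>u. a \<le> u \<Longrightarrow> u \<le> s \<Longrightarrow> P u) \<Longrightarrow>
                 \<exists>d>0. \<forall>u. s < u \<and> u < s + d \<longrightarrow> P u"
  shows "P b"
proof -
  define A where "A = {s. a \<le> s \<and> s \<le> b \<and> (\<forall>u. a \<le> u \<and> u \<le> s \<longrightarrow> P u)}"
  define S where "S = Sup A"
  have "a \<in> A"
    using \<open>a \<le> b\<close> base by (auto simp: A_def)
  have bdd: "bdd_above A"
    unfolding A_def by (rule bdd_aboveI[of _ b]) auto
  have "a \<le> S"
    unfolding S_def using \<open>a \<in> A\<close> bdd by (rule cSup_upper)
  have "S \<le> b"
    unfolding S_def using \<open>a \<in> A\<close> by (intro cSup_least) (auto simp: A_def)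
  have below: "P u" if "a \<le> u" "u < S" for u
  proof -
    obtain s where "s \<in> A" "u < s"
      using less_cSupD[of A u] \<open>a \<in> A\<close> \<open>u < S\<close> S_def by blast
    then show ?thesis
      using that by (auto simp: A_def)
  qed
  have upto: "P u" if "a \<le> u" "u \<le> S" for u
  proof (cases "u = S")
    case True
    then show ?thesis
      using closed[OF _ \<open>S \<le> b\<close> below] base \<open>a \<le> S\<close> that(1) by force
  qed (use below that in auto)
  have "S = b"
  proof (rule ccontr)
    assume "S \<noteq> b"
    with \<open>S \<le> b\<close> have "S < b" by simp
    then obtain d where d: "d > 0" "\<And>u. S < u \<Longrightarrow> u < S + d \<Longrightarrow> P u"
      using step[OF \<open>a \<le> S\<close> _ upto] by blast
    define u where "u = min (S + d/2) b"
    have "u \<in> A"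
      unfolding A_def
    proof (intro CollectI conjI allI impI)
      show "a \<le> u" "u \<le> b"
        using \<open>a \<le> S\<close> \<open>S < b\<close> d(1) by (auto simp: u_def)
      fix v assume "a \<le> v \<and> v \<le> u"
      then show "P v"
        using upto d by (cases "v \<le> S") (auto simp: u_def)
    qed
    then have "u \<le> S"
      unfolding S_def using bdd by (rule cSup_upper)
    moreover have "S < u"
      using \<open>S < b\<close> d(1) by (simp add: u_def)
    ultimately show False by simp
  qed
  then show ?thesis
    using upto \<open>a \<le> S\<close> by simp
qed

lemma dist_lift_le_length:
  fixes p :: "real \<Rightarrow> 'a::metric_space"
  assumes g: "rectifiable_path g" and ab: "0 \<le> a" "a \<le> b" "b \<le> 1" and "0 \<le> c"
    and p: "continuous_on {a..b} p" and lift: "\<And>t. t \<in> {a..b} \<Longrightarrow> f (p t) = g t"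
    and expanding: "\<And>t. t \<in> {a..b} \<Longrightarrow> expanding_at c f (p t)"
  shows "c * dist (p a) (p b) \<le> length_upto g b - length_upto g a"
proof (rule real_induct[OF ab(2), where P="\<lambda>u. c * dist (p a) (p u) \<le> length_upto g u - length_upto g a"])
  fix s assume s: "a < s" "s \<le> b"
    and IH: "\<And>u. a \<le> u \<Longrightarrow> u < s \<Longrightarrow> c * dist (p a) (p u) \<le> length_upto g u - length_upto g a"
  have "continuous_on (closure {a..<s}) (\<lambda>u. c * dist (p a) (p u))"
    using s by (auto intro!: continuous_intros continuous_on_subset[OF p])
  moreover have "c * dist (p a) (p u) \<le> length_upto g s - length_upto g a" if "u \<in> {a..<s}" for u
    using IH[of u] length_upto_mono[OF g, of u s] that s ab by auto
  ultimately show "c * dist (p a) (p s) \<le> length_upto g s - length_upto g a"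
    using continuous_le_on_closure[of "{a..<s}" "\<lambda>u. c * dist (p a) (p u)" s] s by simp
next
  fix s assume s: "a \<le> s" "s < b"
    and IH: "\<And>u. a \<le> u \<Longrightarrow> u \<le> s \<Longrightarrow> c * dist (p a) (p u) \<le> length_upto g u - length_upto g a"
  obtain e where "e > 0" and e: "\<And>z. dist z (p s) < e \<Longrightarrow> c * dist z (p s) \<le> dist (f z) (f (p s))"
    using expanding[of s] s unfolding expanding_at_def by auto
  obtain d where "d > 0" and d: "\<And>u. u \<in> {a..b} \<Longrightarrow> dist u s < d \<Longrightarrow> dist (p u) (p s) < e"
    using p[unfolded continuous_on_iff] s \<open>e > 0\<close> by (metis atLeastAtMost_iff less_imp_le)
  have "c * dist (p a) (p u) \<le> length_upto g u - length_upto g a" if u: "s < u" "u < s + min d (b - s)" for u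
  proof -
    have "u \<in> {a..b}" "s \<in> {a..b}" "dist u s < d"
      using s u by (auto simp: dist_real_def)
    then have "c * dist (p u) (p s) \<le> dist (f (p u)) (f (p s))"
      using d e by blast
    then have "c * dist (p u) (p s) \<le> dist (g u) (g s)"
      using lift \<open>u \<in> {a..b}\<close> \<open>s \<in> {a..b}\<close> by simp
    then have "c * dist (p s) (p u) \<le> dist (g s) (g u)"
      by (simp add: dist_commute)
    moreover have "length_upto g s + dist (g s) (g u) \<le> length_upto g u"
      using ab s u by (intro length_upto_add_dist[OF g]) auto
    moreover have "c * dist (p a) (p u) \<le> c * dist (p a) (p s) + c * dist (p s) (p u)"
      using \<open>0 \<le> c\<close> dist_triangle[of "p a" "p u" "p s"] by (simp add: distrib_left[symmetric] mult_left_mono)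
    ultimately show ?thesis
      using IH[of s] s by linarith
  qed
  then show "\<exists>d>0. \<forall>u. s < u \<and> u < s + d \<longrightarrow> c * dist (p a) (p u) \<le> length_upto g u - length_upto g a"
    using \<open>d > 0\<close> s by (intro exI[of _ "min d (b - s)"]) auto
qed simp

lemma convergent_at_left_if_Cauchy:
  fixes q :: "real \<Rightarrow> 'a::complete_space"
  assumes "\<And>e. e > 0 \<Longrightarrow> \<exists>t0<s. \<forall>t t'. t0 < t \<longrightarrow> t < s \<longrightarrow> t0 < t' \<longrightarrow> t' < s \<longrightarrow> dist (q t) (q t') < e"
  obtains l where "(q \<longlongrightarrow> l) (at_left s)"
proof -
  have cauchy: "cauchy_filter (filtermap q (at_left s))"
    unfolding cauchy_filter_metric_filtermap
  proof (intro allI impI)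
    fix e :: real assume "e > 0"
    then obtain t0 where "t0 < s"
      and t0: "\<forall>t t'. t0 < t \<longrightarrow> t < s \<longrightarrow> t0 < t' \<longrightarrow> t' < s \<longrightarrow> dist (q t) (q t') < e"
      using assms by blast
    then show "\<exists>P. eventually P (at_left s) \<and> (\<forall>t t'. P t \<and> P t' \<longrightarrow> dist (q t) (q t') < e)"
      using eventually_at_left_real[OF \<open>t0 < s\<close>] by (intro exI[of _ "\<lambda>t. t \<in> {t0<..<s}"]) auto
  qed
  have "filtermap q (at_left s) \<noteq> bot"
    by (simp add: filtermap_bot_iff trivial_limit_at_left_real)
  then obtain l where "filtermap q (at_left s) \<le> nhds l"
    using cauchy_filter_complete_converges[OF cauchy complete_UNIV] by auto
  then show thesis
    using that by (simp add: filterlim_def)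
qed

lemma continuous_on_Icc_extend_at_left:
  fixes q :: "real \<Rightarrow> 'a::topological_space"
  assumes "a < s" and q: "\<And>u. a \<le> u \<Longrightarrow> u < s \<Longrightarrow> continuous_on {a..u} q"
    and l: "(q \<longlongrightarrow> l) (at_left s)"
  shows "continuous_on {a..s} (\<lambda>t. if t < s then q t else l)" (is "continuous_on _ ?p")
  unfolding continuous_on_eq_continuous_within
proof
  fix t assume t: "t \<in> {a..s}"
  show "continuous (at t within {a..s}) ?p"
  proof (cases "t < s")
    case True
    define u where "u = (t + s) / 2"
    have u: "a \<le> u" "u < s" "t < u"
      using t True by (auto simp: u_def)
    have "continuous_on {a..u} ?p"
      using q[OF u(1,2)] by (rule continuous_on_eq) (use u in auto)
    then have "continuous (at t within {a..u}) ?p"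
      using t u by (simp add: continuous_on_eq_continuous_within)
    moreover have "at t within {a..s} = at t within {a..u}"
      using t u by (intro at_within_nhd[of _ "{..<u}"]) auto
    ultimately show ?thesis
      by simp
  next
    case False
    then have "t = s"
      using t by simp
    have "(?p \<longlongrightarrow> l) (at_left s)"
      using l by (rule tendsto_cong[THEN iffD1, rotated])
        (use eventually_at_left_real[OF \<open>a < s\<close>] in \<open>auto elim: eventually_mono\<close>)
    then show ?thesis
      using \<open>t = s\<close> \<open>a < s\<close> by (simp add: continuous_within at_within_Icc_at_left)
  qed
qed

lemma lift_converges_at_left:
  fixes f :: "'a::complete_space \<Rightarrow> 'b::metric_space"
  assumes g: "rectifiable_path g" and "c > 0" and expanding: "\<And>x. f x \<in> g ` {0..1} \<Longrightarrow> expanding_at c f x"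
    and s: "0 < s" "s \<le> 1" and q: "\<And>u. 0 \<le> u \<Longrightarrow> u < s \<Longrightarrow> is_lift f g x u q"
  obtains l where "(q \<longlongrightarrow> l) (at_left s)"
proof (rule convergent_at_left_if_Cauchy)
  have q_dist: "c * dist (q t) (q t') \<le> length_upto g t' - length_upto g t"
    if "0 \<le> t" "t \<le> t'" "t' < s" for t t'
  proof (rule dist_lift_le_length[OF g that(1,2)])
    show "continuous_on {t..t'} q"
      using q[of t'] that unfolding is_lift_def by (auto intro: continuous_on_subset)
    show "f (q u) = g u" "expanding_at c f (q u)" if "u \<in> {t..t'}" for u
      using q[of t'] expanding[of "q u"] that \<open>0 \<le> t\<close> \<open>t \<le> t'\<close> \<open>t' < s\<close> s
      unfolding is_lift_def by auto
  qed (use that s \<open>c > 0\<close> in auto)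
  fix e :: real assume "e > 0"
  then obtain t0 where t0: "0 \<le> t0" "t0 < s"
    and small: "\<And>t. t0 \<le> t \<Longrightarrow> t < s \<Longrightarrow> length_upto g t - length_upto g t0 < c * e"
    using length_upto_Cauchy_at_left[OF g s] \<open>c > 0\<close> by (metis mult_pos_pos)
  have "dist (q t) (q t') < e" if "t0 < t" "t \<le> t'" "t' < s" for t t'
  proof -
    have "c * dist (q t) (q t') \<le> length_upto g t' - length_upto g t0"
      using q_dist[of t t'] length_upto_mono[OF g, of t0 t] that t0 s by auto
    also have "\<dots> < c * e"
      using small that by simp
    finally show ?thesis
      using \<open>c > 0\<close> by simp
  qed
  then show "\<exists>t0<s. \<forall>t t'. t0 < t \<longrightarrow> t < s \<longrightarrow> t0 < t' \<longrightarrow> t' < s \<longrightarrow> dist (q t) (q t') < e"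
    using t0 by (metis dist_commute linorder_le_cases)
qed

lemma lift_extend_to_limit:
  fixes f :: "'a::complete_space \<Rightarrow> 'b::metric_space"
  assumes lh: "local_homeo f" and g: "rectifiable_path g" "continuous_on {0..1} g"
    and "c > 0" and expanding: "\<And>x. f x \<in> g ` {0..1} \<Longrightarrow> expanding_at c f x"
    and s: "0 < s" "s \<le> 1" and lifts: "\<And>u. 0 \<le> u \<Longrightarrow> u < s \<Longrightarrow> \<exists>p. is_lift f g x u p"
  shows "\<exists>p. is_lift f g x s p"
proof -
  obtain q where q: "\<And>u. 0 \<le> u \<Longrightarrow> u < s \<Longrightarrow> is_lift f g x u q"
    using is_lift_glue[OF lh lifts] by blast
  then obtain l where l: "(q \<longlongrightarrow> l) (at_left s)"
    using lift_converges_at_left[OF g(1) \<open>c > 0\<close> expanding s] by blast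
  have q_lift: "f (q t) = g t" if "0 \<le> t" "t < s" for t
    using q[OF that] that unfolding is_lift_def by auto
  have "f l = g s"
  proof (rule tendsto_unique[OF trivial_limit_at_left_real])
    show "((\<lambda>t. f (q t)) \<longlongrightarrow> f l) (at_left s)"
      using local_homeo_imp_continuous[OF lh] l by (simp add: isCont_tendsto_compose continuous_on_eq_continuous_at)
    have "(g \<longlongrightarrow> g s) (at s within {0..1})"
      using g(2) s by (simp add: continuous_on_def)
    then have "(g \<longlongrightarrow> g s) (at s within {0..s})"
      by (rule tendsto_within_subset) (use s in auto)
    then have "(g \<longlongrightarrow> g s) (at_left s)"
      using s by (simp add: at_within_Icc_at_left)
    then show "((\<lambda>t. f (q t)) \<longlongrightarrow> g s) (at_left s)"
      by (rule tendsto_cong[THEN iffD1, rotated])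
        (use eventually_at_left_real[OF s(1)] q_lift in \<open>auto elim: eventually_mono\<close>)
  qed
  define p where "p t = (if t < s then q t else l)" for t
  have "continuous_on {0..s} p"
    unfolding p_def using q s(1) l unfolding is_lift_def
    by (intro continuous_on_Icc_extend_at_left) auto
  moreover have "p 0 = x" "\<forall>t\<in>{0..s}. f (p t) = g t"
    using q[of 0] s q_lift \<open>f l = g s\<close> by (auto simp: p_def is_lift_def)
  ultimately show ?thesis
    unfolding is_lift_def by blast
qed

lemma lift_extend_right:
  fixes f :: "'a::metric_space \<Rightarrow> 'b::metric_space"
  assumes lh: "local_homeo f" and g: "continuous_on {0..b} g"
    and p: "is_lift f g x s p" and s: "0 \<le> s" "s < b"
  obtains u p' where "s < u" "is_lift f g x u p'"
proof -
  obtain V \<phi> where V: "open V" "p s \<in> V" "open (f ` V)" "homeomorphism V (f ` V) f \<phi>"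
    using local_homeoE[OF lh] by metis
  have "f (p s) = g s"
    using p s unfolding is_lift_def by auto
  then obtain e where "e > 0" and e: "ball (g s) e \<subseteq> f ` V"
    using V(2,3) openE by (metis imageI)
  obtain d where "d > 0" and d: "\<And>t. t \<in> {0..b} \<Longrightarrow> dist t s < d \<Longrightarrow> dist (g t) (g s) < e"
    using g[unfolded continuous_on_iff] s \<open>e > 0\<close> by (metis atLeastAtMost_iff less_imp_le)
  define u where "u = min (s + d/2) b"
  have "s < u" "u \<le> b"
    using s \<open>d > 0\<close> by (auto simp: u_def)
  have gV: "g t \<in> f ` V" if "t \<in> {s..u}" for t
    using d[of t] that s \<open>d > 0\<close> e by (auto simp: u_def dist_real_def dist_commute subset_iff)
  define p' where "p' t = (if t \<le> s then p t else \<phi> (g t))" for t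
  have "continuous_on {0..u} p'"
    unfolding p'_def
  proof (rule continuous_on_cases_le)
    show "continuous_on {t \<in> {0..u}. t \<le> s} p"
      using p unfolding is_lift_def by (rule continuous_on_subset[OF conjunct1]) auto
    have "continuous_on {s..u} (\<lambda>t. \<phi> (g t))"
      using \<open>u \<le> b\<close> s gV
      by (intro continuous_on_compose2[OF homeomorphism_cont2[OF V(4)] continuous_on_subset[OF g]]) auto
    then show "continuous_on {t \<in> {0..u}. s \<le> t} (\<lambda>t. \<phi> (g t))"
      by (rule continuous_on_subset) auto
    show "p t = \<phi> (g t)" if "t \<in> {0..u}" "t = s" for t
      using homeomorphism_apply1[OF V(4,2)] \<open>f (p s) = g s\<close> that by simp
  qed (rule continuous_on_id)
  moreover have "p' 0 = x" "\<forall>t\<in>{0..u}. f (p' t) = g t"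
    using p s gV homeomorphism_apply2[OF V(4)] by (auto simp: p'_def is_lift_def)
  ultimately show thesis
    using that \<open>s < u\<close> unfolding is_lift_def by blast
qed

lemma lift_exists_if_expanding:
  fixes f :: "'a::complete_space \<Rightarrow> 'b::metric_space"
  assumes lh: "local_homeo f" and g: "rectifiable_path g" "continuous_on {0..1} g"
    and "c > 0" and expanding: "\<And>x. f x \<in> g ` {0..1} \<Longrightarrow> expanding_at c f x"
    and "f x = g 0"
  shows "\<exists>p. is_lift f g x 1 p"
proof (rule real_induct[where P="\<lambda>s. \<exists>p. is_lift f g x s p", OF zero_le_one])
  show "\<exists>p. is_lift f g x 0 p"
    using \<open>f x = g 0\<close> by (intro exI[of _ "\<lambda>_. x"]) (simp add: is_lift_def)
next
  fix s :: real assume "0 < s" "s \<le> 1" "\<And>u. 0 \<le> u \<Longrightarrow> u < s \<Longrightarrow> \<exists>p. is_lift f g x u p"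
  then show "\<exists>p. is_lift f g x s p"
    using lift_extend_to_limit[OF lh g \<open>c > 0\<close> expanding] by blast
next
  fix s :: real assume s: "0 \<le> s" "s < 1" and "\<And>u. 0 \<le> u \<Longrightarrow> u \<le> s \<Longrightarrow> \<exists>p. is_lift f g x u p"
  then obtain p where "is_lift f g x s p"
    by blast
  then obtain u p' where "s < u" and p': "is_lift f g x u p'"
    using lift_extend_right[OF lh g(2) _ s] by blast
  have "is_lift f g x v p'" if "s < v" "v < u" for v
    using is_lift_restrict[OF p'] that s by simp
  with \<open>s < u\<close> show "\<exists>d>0. \<forall>v. s < v \<and> v < s + d \<longrightarrow> (\<exists>p. is_lift f g x v p)"
    by (intro exI[of _ "u - s"]) auto
qed

lemma rectifiable_path_lift_exists:
  fixes f :: "'a::complete_space \<Rightarrow> 'b::metric_space"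
  assumes "local_homeo f"
    and "\<And>B::'a set. bounded B \<Longrightarrow> (INF x\<in>B. lower_deriv f x) > 0"
    and "\<exists>y0 x0. \<forall>M. \<exists>R. \<forall>x. dist x x0 > R \<longrightarrow> dist (f x) y0 > M"
    and "rectifiable_path g" "continuous_on {0..1} g" "f x = g 0"
  shows "\<exists>p. is_lift f g x 1 p"
proof -
  have "bounded (g ` {0..1})"
    using assms(5) by (intro compact_imp_bounded compact_continuous_image) auto
  then obtain c where "c > 0" "\<And>x. f x \<in> g ` {0..1} \<Longrightarrow> expanding_at c f x"
    using expanding_over_bounded[OF assms(2,3)] by blast
  then show ?thesis
    using lift_exists_if_expanding[OF assms(1,4,5)] assms(6) by blast
qed

section \<open>Evenly covered neighbourhoods\<close>

lemma local_homeo_open_section_image: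
  fixes f :: "'a::metric_space \<Rightarrow> 'b::metric_space"
  assumes lh: "local_homeo f" and "open U" and "continuous_on U \<sigma>"
    and right_inv: "\<And>z. z \<in> U \<Longrightarrow> f (\<sigma> z) = z"
  shows "open (\<sigma> ` U)"
proof -
  have f_cont: "continuous_on UNIV f"
    by (rule local_homeo_imp_continuous[OF lh])
  then have "open (f -` U)"
    using \<open>open U\<close> by (simp add: open_vimage)
  have "\<sigma> ` U = {x \<in> f -` U. \<sigma> (f x) = id x}"
  proof (intro subset_antisym subsetI)
    fix x assume "x \<in> \<sigma> ` U"
    then show "x \<in> {x \<in> f -` U. \<sigma> (f x) = id x}"
      using right_inv by auto
  next
    fix x assume "x \<in> {x \<in> f -` U. \<sigma> (f x) = id x}"
    then have "f x \<in> U" "\<sigma> (f x) = x"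
      by simp_all
    then show "x \<in> \<sigma> ` U"
      using imageI[of "f x" U \<sigma>] by simp
  qed
  moreover have "openin (top_of_set (f -` U)) {x \<in> f -` U. \<sigma> (f x) = id x}"
  proof (rule local_homeo_coincidence_openin[OF lh])
    show "continuous_on (f -` U) (\<lambda>x. \<sigma> (f x))"
      by (rule continuous_on_compose2[OF \<open>continuous_on U \<sigma>\<close> continuous_on_subset[OF f_cont]]) auto
    show "continuous_on (f -` U) id"
      by (rule continuous_on_id')
    show "f (\<sigma> (f x)) = f (id x)" if "x \<in> f -` U" for x
      using right_inv that by simp
  qed
  ultimately have "openin (top_of_set (f -` U)) (\<sigma> ` U)"
    by simp
  then show ?thesis
    using \<open>open (f -` U)\<close> openin_open_trans by blast
qed

lemma evenly_covered_by_sections: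
  fixes f :: "'a::metric_space \<Rightarrow> 'b::metric_space"
  assumes lh: "local_homeo f" and "open U"
    and cont: "\<And>a. a \<in> A \<Longrightarrow> continuous_on U (\<sigma> a)"
    and right_inv: "\<And>a z. a \<in> A \<Longrightarrow> z \<in> U \<Longrightarrow> f (\<sigma> a z) = z"
    and cover: "\<And>x. f x \<in> U \<Longrightarrow> \<exists>a\<in>A. \<sigma> a (f x) = x"
    and disjoint: "\<And>a b z. a \<in> A \<Longrightarrow> b \<in> A \<Longrightarrow> z \<in> U \<Longrightarrow> \<sigma> a z = \<sigma> b z \<Longrightarrow> a = b"
  shows "\<exists>\<V>. \<Union>\<V> = f -` U \<and> (\<forall>V\<in>\<V>. open V) \<and> pairwise disjnt \<V> \<and>
             (\<forall>V\<in>\<V>. \<exists>q. homeomorphism V U f q)"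
proof (intro exI[of _ "(\<lambda>a. \<sigma> a ` U) ` A"] conjI ballI)
  show "\<Union>((\<lambda>a. \<sigma> a ` U) ` A) = f -` U"
  proof
    show "\<Union>((\<lambda>a. \<sigma> a ` U) ` A) \<subseteq> f -` U"
      using right_inv by auto
    show "f -` U \<subseteq> \<Union>((\<lambda>a. \<sigma> a ` U) ` A)"
    proof
      fix x assume "x \<in> f -` U"
      then obtain a where "a \<in> A" "\<sigma> a (f x) = x"
        using cover by blast
      then show "x \<in> \<Union>((\<lambda>a. \<sigma> a ` U) ` A)"
        using \<open>x \<in> f -` U\<close> by (metis UN_iff image_eqI vimageE)
    qed
  qed
  show "pairwise disjnt ((\<lambda>a. \<sigma> a ` U) ` A)"
  proof (rule pairwiseI)
    fix V W assume "V \<in> (\<lambda>a. \<sigma> a ` U) ` A" "W \<in> (\<lambda>a. \<sigma> a ` U) ` A" "V \<noteq> W"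
    then obtain a b where "a \<in> A" "b \<in> A" "V = \<sigma> a ` U" "W = \<sigma> b ` U" "a \<noteq> b"
      by blast
    have "\<sigma> a z \<noteq> \<sigma> b z'" if "z \<in> U" "z' \<in> U" for z z'
      using right_inv[OF \<open>a \<in> A\<close> that(1)] right_inv[OF \<open>b \<in> A\<close> that(2)]
        disjoint[OF \<open>a \<in> A\<close> \<open>b \<in> A\<close> that(1)] \<open>a \<noteq> b\<close> by metis
    then show "disjnt V W"
      unfolding \<open>V = \<sigma> a ` U\<close> \<open>W = \<sigma> b ` U\<close> disjnt_def by blast
  qed
  fix V assume "V \<in> (\<lambda>a. \<sigma> a ` U) ` A"
  then obtain a where "a \<in> A" and V: "V = \<sigma> a ` U"
    by blast
  show "open V"
    unfolding V using lh \<open>open U\<close> cont[OF \<open>a \<in> A\<close>] right_inv[OF \<open>a \<in> A\<close>]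
    by (rule local_homeo_open_section_image)
  have "homeomorphism V U f (\<sigma> a)"
    unfolding V
  proof (rule homeomorphismI)
    show "continuous_on (\<sigma> a ` U) f"
      using local_homeo_imp_continuous[OF lh] by (rule continuous_on_subset) simp
  qed (use right_inv[OF \<open>a \<in> A\<close>] cont[OF \<open>a \<in> A\<close>] in auto)
  then show "\<exists>q. homeomorphism V U f q"
    by blast
qed

section \<open>Lifting rectifiable contractions\<close>

definition rectifiable_contraction :: "('b \<times> real \<Rightarrow> 'b::metric_space) \<Rightarrow> 'b set \<Rightarrow> 'b \<Rightarrow> bool" where
  "rectifiable_contraction H U y \<longleftrightarrow> continuous_on (U \<times> {0..1}) H \<and>
     (\<forall>z\<in>U. H (z, 0) = y \<and> H (z, 1) = z \<and> rectifiable_path (\<lambda>t. H (z, t)))"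

lemma locally_R_contractibleE:
  fixes y :: "'b::metric_space"
  assumes "locally_R_contractible (UNIV :: 'b set)"
  obtains U H where "open U" "y \<in> U" "rectifiable_contraction H U y"
proof -
  obtain U H where "openin (top_of_set UNIV) U" "y \<in> U" "continuous_on (U \<times> {0..1}) H"
    "\<forall>z\<in>U. H (z, 0) = y \<and> H (z, 1) = z \<and> rectifiable_path (\<lambda>t. H (z, t))"
    using assms[unfolded locally_R_contractible_def, rule_format, OF UNIV_I, of y]
    by (elim exE conjE)
  then show thesis
    using that unfolding rectifiable_contraction_def by (simp add: subtopology_UNIV)
qed

lemma rectifiable_contraction_path:
  assumes "rectifiable_contraction H U y" "z \<in> U"
  shows "continuous_on {0..1} (\<lambda>t. H (z, t))"
proof -
  have "continuous_on (U \<times> {0..1}) H"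
    using assms(1) unfolding rectifiable_contraction_def by blast
  then show ?thesis
    by (rule continuous_on_compose2) (use assms(2) in \<open>auto intro!: continuous_intros\<close>)
qed

lemma eventually_within_tube:
  assumes "continuous_on (U \<times> T) H" "open W" "compact K" "K \<subseteq> T" "z0 \<in> U"
    and "\<And>t. t \<in> K \<Longrightarrow> H (z0, t) \<in> W"
  shows "\<forall>\<^sub>F z in at z0 within U. \<forall>t\<in>K. H (z, t) \<in> W"
proof -
  obtain W' where "open W'" and W': "(U \<times> T) \<inter> H -` W = (U \<times> T) \<inter> W'"
    using continuous_openin_preimage_gen[OF assms(1,2)] unfolding openin_open by blast
  have "{z0} \<times> K \<subseteq> W'"
    using W' assms(4-6) by blast
  then obtain X where "z0 \<in> X" "open X" "X \<times> K \<subseteq> W'"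
    using Elementary_Topology.tube_lemma[OF assms(3) \<open>open W'\<close>] by blast
  have "\<forall>\<^sub>F z in at z0 within U. z \<in> X"
    using topological_tendstoD[OF tendsto_ident_at \<open>open X\<close> \<open>z0 \<in> X\<close>] .
  moreover have "\<forall>\<^sub>F z in at z0 within U. z \<in> U"
    by (simp add: eventually_at_filter)
  ultimately show ?thesis
    by eventually_elim (use W' \<open>X \<times> K \<subseteq> W'\<close> assms(4) in blast)
qed

locale rectifiable_path_lifting =
  fixes f :: "'a::metric_space \<Rightarrow> 'b::metric_space"
  assumes local_homeo: "local_homeo f"
    and lift_exists: "\<And>g x. rectifiable_path g \<Longrightarrow> continuous_on {0..1} g \<Longrightarrow> f x = g 0 \<Longrightarrow>
                        \<exists>p. is_lift f g x 1 p"
begin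

definition the_lift :: "(real \<Rightarrow> 'b) \<Rightarrow> 'a \<Rightarrow> real \<Rightarrow> 'a" where
  "the_lift g x = (SOME p. is_lift f g x 1 p)"

lemma is_lift_the_lift:
  assumes "rectifiable_path g" "continuous_on {0..1} g" "f x = g 0"
  shows "is_lift f g x 1 (the_lift g x)"
  using lift_exists[OF assms] someI_ex unfolding the_lift_def by metis

lemma the_lift_eq:
  assumes "rectifiable_path g" "continuous_on {0..1} g" "is_lift f g x 1 p" "t \<in> {0..1}"
  shows "the_lift g x t = p t"
proof -
  have "f x = g 0"
    using assms(3) unfolding is_lift_def by force
  then show ?thesis
    using is_lift_unique[OF local_homeo is_lift_the_lift[OF assms(1,2)] assms(3,4)] by blast
qed

lemma is_lift_contraction:
  assumes "rectifiable_contraction H U y" "z \<in> U" "f a = y"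
  shows "is_lift f (\<lambda>t. H (z, t)) a 1 (the_lift (\<lambda>t. H (z, t)) a)"
  using assms rectifiable_contraction_path[OF assms(1,2)]
  by (intro is_lift_the_lift) (auto simp: rectifiable_contraction_def)

lemma f_the_lift_contraction_endpoint:
  assumes "rectifiable_contraction H U y" "z \<in> U" "f a = y"
  shows "f (the_lift (\<lambda>t. H (z, t)) a 1) = z"
  using is_lift_contraction[OF assms] assms(1,2) unfolding is_lift_def rectifiable_contraction_def by auto

lemma the_lift_contraction_endpoint_surj:
  assumes H: "rectifiable_contraction H U y" and "z \<in> U" "f x = z"
  obtains a where "f a = y" "the_lift (\<lambda>t. H (z, t)) a 1 = x"
proof -
  let ?g = "\<lambda>t. H (z, t)" and ?r = "\<lambda>t. H (z, 1 - t)"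
  have g: "rectifiable_path ?g" "continuous_on {0..1} ?g" "?g 0 = y" "?g 1 = z"
    using H \<open>z \<in> U\<close> rectifiable_contraction_path[OF H \<open>z \<in> U\<close>]
    unfolding rectifiable_contraction_def by auto
  have "continuous_on {0..1} ?r"
    by (rule continuous_on_compose2[OF g(2)]) (auto intro!: continuous_intros)
  then have r: "is_lift f ?r x 1 (the_lift ?r x)"
    using rectifiable_path_reverse[OF g(1)] \<open>f x = z\<close> g(4) by (intro is_lift_the_lift) auto
  define a where "a = the_lift ?r x 1"
  have "f a = y"
    using r g(3) unfolding is_lift_def a_def by auto
  have "is_lift f ?g a 1 (\<lambda>t. the_lift ?r x (1 - t))"
    using is_lift_reverse[OF r] unfolding a_def by simp
  then have "the_lift ?g a 1 = the_lift ?r x 0"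
    using the_lift_eq[OF g(1,2)] by simp
  also have "\<dots> = x"
    using r unfolding is_lift_def by simp
  finally show thesis
    using that \<open>f a = y\<close> by blast
qed

lemma the_lift_contraction_endpoint_inj:
  assumes H: "rectifiable_contraction H U y" and "z \<in> U" "f a = y" "f b = y"
    and "the_lift (\<lambda>t. H (z, t)) a 1 = the_lift (\<lambda>t. H (z, t)) b 1"
  shows "a = b"
proof -
  let ?g = "\<lambda>t. H (z, t)" and ?r = "\<lambda>t. H (z, 1 - t)"
  have "is_lift f ?g a 1 (the_lift ?g a)" "is_lift f ?g b 1 (the_lift ?g b)"
    using is_lift_contraction[OF H \<open>z \<in> U\<close>] assms(3,4) by auto
  then have "is_lift f ?r (the_lift ?g a 1) 1 (\<lambda>t. the_lift ?g a (1 - t))"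
    "is_lift f ?r (the_lift ?g a 1) 1 (\<lambda>t. the_lift ?g b (1 - t))"
    using is_lift_reverse assms(5) by fastforce+
  from is_lift_unique[OF local_homeo this, of 1] have "the_lift ?g a 0 = the_lift ?g b 0"
    by simp
  moreover have "the_lift ?g a 0 = a" "the_lift ?g b 0 = b"
    using \<open>is_lift f ?g a 1 (the_lift ?g a)\<close> \<open>is_lift f ?g b 1 (the_lift ?g b)\<close>
    unfolding is_lift_def by simp_all
  ultimately show ?thesis
    by simp
qed

lemma eventually_the_lift_eq_chart:
  assumes H: "rectifiable_contraction H U y" and "f a = y" "z0 \<in> U"
    and V: "open (f ` V)" "homeomorphism V (f ` V) f \<phi>"
    and K: "compact K" "connected K" "K \<subseteq> {0..1}" "s0 \<in> K"
    and z0_in_V: "\<And>t. t \<in> K \<Longrightarrow> the_lift (\<lambda>t. H (z0, t)) a t \<in> V"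
    and s0_in_V: "\<forall>\<^sub>F z in at z0 within U. the_lift (\<lambda>t. H (z, t)) a s0 \<in> V"
  shows "\<forall>\<^sub>F z in at z0 within U. \<forall>t\<in>K. the_lift (\<lambda>t. H (z, t)) a t = \<phi> (H (z, t))"
proof -
  define G where "G z = the_lift (\<lambda>t. H (z, t)) a" for z
  have G: "continuous_on {0..1} (G z)" "\<And>t. t \<in> {0..1} \<Longrightarrow> f (G z t) = H (z, t)" if "z \<in> U" for z
    using is_lift_contraction[OF H that \<open>f a = y\<close>] unfolding is_lift_def G_def by auto
  have "H (z0, t) \<in> f ` V" if "t \<in> K" for t
    using G(2)[OF \<open>z0 \<in> U\<close>, of t] z0_in_V[OF that] K(3) that unfolding G_def by force
  then have "\<forall>\<^sub>F z in at z0 within U. \<forall>t\<in>K. H (z, t) \<in> f ` V"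
    using H K(1,3) V(1) \<open>z0 \<in> U\<close> unfolding rectifiable_contraction_def
    by (intro eventually_within_tube[of U "{0..1}" H]) auto
  moreover have "\<forall>\<^sub>F z in at z0 within U. z \<in> U"
    by (simp add: eventually_at_filter)
  ultimately have "\<forall>\<^sub>F z in at z0 within U. z \<in> U \<and> (\<forall>t\<in>K. H (z, t) \<in> f ` V) \<and> G z s0 \<in> V"
    using s0_in_V unfolding G_def by eventually_elim blast
  then show ?thesis
    unfolding G_def[symmetric]
  proof (rule eventually_mono, intro ballI)
    fix z t assume z: "z \<in> U \<and> (\<forall>t\<in>K. H (z, t) \<in> f ` V) \<and> G z s0 \<in> V" and "t \<in> K"
    show "G z t = \<phi> (H (z, t))"
    proof (rule local_homeo_lift_unique[OF local_homeo K(2) _ _ _ K(4) _ \<open>t \<in> K\<close>])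
      show "continuous_on K (G z)"
        using G(1) z K(3) by (blast intro: continuous_on_subset)
      have "continuous_on K (\<lambda>t. H (z, t))"
        using rectifiable_contraction_path[OF H] z K(3) by (blast intro: continuous_on_subset)
      then show "continuous_on K (\<lambda>t. \<phi> (H (z, t)))"
        using z by (intro continuous_on_compose2[OF homeomorphism_cont2[OF V(2)]]) auto
      show "f (G z t') = f (\<phi> (H (z, t')))" if "t' \<in> K" for t'
        using G(2) homeomorphism_apply2[OF V(2)] z that K(3) by auto
      have "H (z, s0) = f (G z s0)"
        using G(2) z K(3,4) by auto
      then show "G z s0 = \<phi> (H (z, s0))"
        using homeomorphism_apply1[OF V(2)] z by simp
    qed
  qed
qed

lemma the_lift_continuous_within_chart:
  assumes H: "rectifiable_contraction H U y" and "f a = y" "z0 \<in> U"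
    and V: "open V" "open (f ` V)" "homeomorphism V (f ` V) f \<phi>"
    and s: "s0 \<in> {0..1}" "s1 \<in> {0..1}"
    and segment_in_V: "\<And>t. t \<in> closed_segment s0 s1 \<Longrightarrow> the_lift (\<lambda>t. H (z0, t)) a t \<in> V"
    and cont0: "continuous (at z0 within U) (\<lambda>z. the_lift (\<lambda>t. H (z, t)) a s0)"
  shows "continuous (at z0 within U) (\<lambda>z. the_lift (\<lambda>t. H (z, t)) a s1)"
proof -
  define G where "G z = the_lift (\<lambda>t. H (z, t)) a" for z
  have "closed_segment s0 s1 \<subseteq> {0..1}"
    using s by (intro closed_segment_subset) auto
  moreover have "\<forall>\<^sub>F z in at z0 within U. G z s0 \<in> V"
    using topological_tendstoD[OF cont0[unfolded continuous_within] V(1)] segment_in_V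
    unfolding G_def by simp
  ultimately have "\<forall>\<^sub>F z in at z0 within U. \<forall>t\<in>closed_segment s0 s1. G z t = \<phi> (H (z, t))"
    unfolding G_def using segment_in_V
    by (intro eventually_the_lift_eq_chart[OF H \<open>f a = y\<close> \<open>z0 \<in> U\<close> V(2,3)]) auto
  then have "\<forall>\<^sub>F z in at z0 within U. \<phi> (H (z, s1)) = G z s1"
    by (rule eventually_mono) simp
  have "G z0 s1 \<in> V" "H (z0, s1) = f (G z0 s1)"
    using segment_in_V[of s1] is_lift_contraction[OF H \<open>z0 \<in> U\<close> \<open>f a = y\<close>] s(2)
    unfolding G_def is_lift_def by auto
  have "continuous (at z0 within U) (\<lambda>z. \<phi> (H (z, s1)))"
  proof (rule continuous_within_compose3[where g = \<phi> and f = "\<lambda>z. H (z, s1)"])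
    show "isCont \<phi> (H (z0, s1))"
      using homeomorphism_cont2[OF V(3)] V(2) \<open>G z0 s1 \<in> V\<close> \<open>H (z0, s1) = f (G z0 s1)\<close>
      by (simp add: continuous_on_eq_continuous_at)
    have "continuous_on (U \<times> {0..1}) H"
      using H by (simp add: rectifiable_contraction_def)
    then have "continuous_on U (\<lambda>z. H (z, s1))"
      by (rule continuous_on_compose2) (use s in \<open>auto intro!: continuous_intros\<close>)
    then show "continuous (at z0 within U) (\<lambda>z. H (z, s1))"
      using \<open>z0 \<in> U\<close> by (simp add: continuous_on_eq_continuous_within)
  qed
  moreover have "\<phi> (H (z0, s1)) = G z0 s1"
    using homeomorphism_apply1[OF V(3) \<open>G z0 s1 \<in> V\<close>] \<open>H (z0, s1) = f (G z0 s1)\<close> by simp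
  ultimately show ?thesis
    using \<open>\<forall>\<^sub>F z in at z0 within U. \<phi> (H (z, s1)) = G z s1\<close>
    unfolding continuous_within G_def by (auto intro: Lim_transform_eventually)
qed

lemma the_lift_continuity_propagates:
  assumes H: "rectifiable_contraction H U y" and "f a = y" "z0 \<in> U" "s \<in> {0..1}"
  obtains \<delta> where "\<delta> > 0"
    "\<And>s0 s1. s0 \<in> {0..1} \<inter> ball s \<delta> \<Longrightarrow> s1 \<in> {0..1} \<inter> ball s \<delta> \<Longrightarrow>
       continuous (at z0 within U) (\<lambda>z. the_lift (\<lambda>t. H (z, t)) a s0) \<Longrightarrow>
       continuous (at z0 within U) (\<lambda>z. the_lift (\<lambda>t. H (z, t)) a s1)"
proof -
  define G where "G z = the_lift (\<lambda>t. H (z, t)) a" for z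
  obtain V \<phi> where V: "open V" "G z0 s \<in> V" "open (f ` V)" "homeomorphism V (f ` V) f \<phi>"
    using local_homeoE[OF local_homeo] by metis
  obtain e where "e > 0" and e: "ball (G z0 s) e \<subseteq> V"
    using V(1,2) openE by blast
  have "continuous_on {0..1} (G z0)"
    using is_lift_contraction[OF H \<open>z0 \<in> U\<close> \<open>f a = y\<close>] unfolding is_lift_def G_def by auto
  then obtain \<delta> where "\<delta> > 0" and "\<forall>t\<in>{0..1}. dist t s < \<delta> \<longrightarrow> dist (G z0 t) (G z0 s) < e"
    using \<open>s \<in> {0..1}\<close> \<open>e > 0\<close> unfolding continuous_on_iff by blast
  then have in_V: "G z0 t \<in> V" if "t \<in> {0..1} \<inter> ball s \<delta>" for t
    using that e by (auto simp: dist_commute subset_iff)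
  have "closed_segment s0 s1 \<subseteq> {0..1} \<inter> ball s \<delta>"
    if "s0 \<in> {0..1} \<inter> ball s \<delta>" "s1 \<in> {0..1} \<inter> ball s \<delta>" for s0 s1
    using that by (intro closed_segment_subset convex_Int) auto
  with \<open>\<delta> > 0\<close> show thesis
    using that the_lift_continuous_within_chart[OF H \<open>f a = y\<close> \<open>z0 \<in> U\<close> V(1,3,4)] in_V
    unfolding G_def by (meson IntD1 subsetD)
qed

lemma continuous_on_the_lift_contraction_endpoint:
  assumes H: "rectifiable_contraction H U y" and "f a = y"
  shows "continuous_on U (\<lambda>z. the_lift (\<lambda>t. H (z, t)) a 1)"
  unfolding continuous_on_eq_continuous_within
proof
  fix z0 assume "z0 \<in> U"
  let ?P = "\<lambda>s. continuous (at z0 within U) (\<lambda>z. the_lift (\<lambda>t. H (z, t)) a s)"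
  show "?P 1"
  proof (rule connected_induction_simple[of "{0..1}" 0 1 ?P])
    have start: "the_lift (\<lambda>t. H (z, t)) a 0 = a" if "z \<in> U" for z
      using is_lift_contraction[OF H that \<open>f a = y\<close>] by (simp add: is_lift_def)
    have "continuous_on U (\<lambda>z. the_lift (\<lambda>t. H (z, t)) a 0)"
      by (rule continuous_on_eq[OF continuous_on_const]) (simp add: start)
    then show "?P 0"
      using \<open>z0 \<in> U\<close> by (simp add: continuous_on_eq_continuous_within)
    fix s :: real assume "s \<in> {0..1}"
    then obtain \<delta> where "\<delta> > 0"
      and \<delta>: "\<And>s0 s1. s0 \<in> {0..1} \<inter> ball s \<delta> \<Longrightarrow> s1 \<in> {0..1} \<inter> ball s \<delta> \<Longrightarrow> ?P s0 \<Longrightarrow> ?P s1"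
      using the_lift_continuity_propagates[OF H \<open>f a = y\<close> \<open>z0 \<in> U\<close>] by blast
    have "openin (top_of_set {0..1}) ({0..1} \<inter> ball s \<delta>)"
      by (simp add: openin_open_Int)
    moreover have "s \<in> {0..1} \<inter> ball s \<delta>"
      using \<open>\<delta> > 0\<close> \<open>s \<in> {0..1}\<close> by simp
    ultimately show "\<exists>T. openin (top_of_set {0..1}) T \<and> s \<in> T \<and> (\<forall>s0\<in>T. \<forall>s1\<in>T. ?P s0 \<longrightarrow> ?P s1)"
      using \<delta> by blast
  qed auto
qed

lemma surj_if_connected:
  assumes "connected (UNIV :: 'b set)" and lrc: "locally_R_contractible (UNIV :: 'b set)"
  shows "surj f"
proof -
  have "open (- range f)"
  proof (subst open_subopen, intro ballI)
    fix y assume "y \<in> - range f"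
    obtain U H where "open U" "y \<in> U" and H: "rectifiable_contraction H U y"
      using locally_R_contractibleE[OF lrc] by blast
    have "U \<subseteq> - range f"
    proof
      fix z assume "z \<in> U"
      show "z \<in> - range f"
      proof
        assume "z \<in> range f"
        then obtain x where "f x = z"
          by blast
        then obtain a where "f a = y"
          using the_lift_contraction_endpoint_surj[OF H \<open>z \<in> U\<close>] by metis
        then show False
          using \<open>y \<in> - range f\<close> by blast
      qed
    qed
    then show "\<exists>T. open T \<and> y \<in> T \<and> T \<subseteq> - range f"
      using \<open>open U\<close> \<open>y \<in> U\<close> by blast
  qed
  then have "range f \<inter> UNIV = {} \<or> - range f \<inter> UNIV = {}"
    using connectedD[OF assms(1) local_homeo_open_range[OF local_homeo]] by blast
  then show ?thesis
    by auto
qed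

theorem covering_space_if_locally_R_contractible:
  assumes "connected (UNIV :: 'b set)" and lrc: "locally_R_contractible (UNIV :: 'b set)"
  shows "covering_space UNIV f UNIV"
proof
  show "continuous_on UNIV f"
    by (rule local_homeo_imp_continuous[OF local_homeo])
  show "f ` UNIV = UNIV"
    using surj_if_connected[OF assms] .
  fix y :: 'b
  obtain U H where "open U" "y \<in> U" and H: "rectifiable_contraction H U y"
    using locally_R_contractibleE[OF lrc] by blast
  define \<sigma> where "\<sigma> a z = the_lift (\<lambda>t. H (z, t)) a 1" for a z
  have "\<exists>\<V>. \<Union>\<V> = f -` U \<and> (\<forall>V\<in>\<V>. open V) \<and> pairwise disjnt \<V> \<and>
             (\<forall>V\<in>\<V>. \<exists>q. homeomorphism V U f q)"
  proof (rule evenly_covered_by_sections[OF local_homeo \<open>open U\<close>, where A = "f -` {y}" and \<sigma> = \<sigma>])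
    show "continuous_on U (\<sigma> a)" if "a \<in> f -` {y}" for a
      unfolding \<sigma>_def using continuous_on_the_lift_contraction_endpoint[OF H] that by simp
    show "f (\<sigma> a z) = z" if "a \<in> f -` {y}" "z \<in> U" for a z
      unfolding \<sigma>_def using f_the_lift_contraction_endpoint[OF H] that by simp
    show "\<exists>a\<in>f -` {y}. \<sigma> a (f x) = x" if "f x \<in> U" for x
      unfolding \<sigma>_def using the_lift_contraction_endpoint_surj[OF H that refl] by (metis vimage_singleton_eq)
    show "a = b" if "a \<in> f -` {y}" "b \<in> f -` {y}" "z \<in> U" "\<sigma> a z = \<sigma> b z" for a b z
      using the_lift_contraction_endpoint_inj[OF H] that unfolding \<sigma>_def by simp
  qed
  then show "\<exists>T. y \<in> T \<and> openin (top_of_set UNIV) T \<and>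
    (\<exists>\<V>. \<Union>\<V> = UNIV \<inter> f -` T \<and> (\<forall>V\<in>\<V>. openin (top_of_set UNIV) V) \<and> pairwise disjnt \<V> \<and>
         (\<forall>V\<in>\<V>. \<exists>q. homeomorphism V T f q))"
    using \<open>y \<in> U\<close> \<open>open U\<close> by auto
qed

end

theorem mainTheorem12:
  fixes f :: "'a::complete_space \<Rightarrow> 'b::metric_space"
  assumes no_isolated: "\<And>x::'a. x islimpt UNIV"
    and lh: "local_homeo f"
    and pc: "path_connected (UNIV :: 'b set)"
    and lrc: "locally_R_contractible (UNIV :: 'b set)"
    and deriv: "\<And>B::'a set. bounded B \<Longrightarrow> (INF x\<in>B. lower_deriv f x) > 0"
    and proper: "\<exists>y0 x0. \<forall>M. \<exists>R. \<forall>x. dist x x0 > R \<longrightarrow> dist (f x) y0 > M"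
  shows "covering_space UNIV f UNIV"
proof -
  interpret rectifiable_path_lifting f
    using lh rectifiable_path_lift_exists[OF lh deriv proper] by unfold_locales
  show ?thesis
    using covering_space_if_locally_R_contractible[OF path_connected_imp_connected[OF pc] lrc] .
qed

end
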